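(* Let $n,m$ be positive integers. The player can win the $(n,m)$-game if and only if $n=1$, or $m=1$, or $(n,m)=(p^a,p^b)$ for some prime $p$ and some positive integers $a,b$.
   Context: The $(n,m)$-game: $n$ counters sit at positions $1,\dots,n$, the vertices (in cyclic order) of a regular $n$-gon table, the labels being fixed from the player's perspective. Each counter shows an element of $\mathbb{Z}_m$, so a configuration is a vector in $\mathbb{Z}_m^n$. The initial configuration is arbitrary and unknown to the player. Each turn the (blindfolded) player chooses a move $y\in\mathbb{Z}_m^n$, which is added coordinatewise to the current configuration; then the table is rotated by an arbitrary, adversarially chosen amount $k\in\mathbb{Z}_n$ (possibly different each turn), i.e. the configuration $x$ is replaced by $x'$ with $x'_{i+k}=x_i$ (indices mod $n$). The player wins if at some moment (including initially) all counters show $0$. Since the player receives no information, a strategy is a finite sequence of moves $y_1,\dots,y_N$; it is winning if for every initial configuration and every choice of rotations the configuration equals the zero vector at some time. "The player can win" means a winning finite sequence exists. *)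

theory Defs
  imports "HOL-Computational_Algebra.Primes"
begin

text \<open>Configurations of the (n,m)-game: vectors in Z_m^n, represented as functions
  nat => nat with values < m on positions 0..n-1 (positions 1..n of the paper shifted
  by one) and value 0 outside.\<close>

definition config :: "nat \<Rightarrow> nat \<Rightarrow> (nat \<Rightarrow> nat) \<Rightarrow> bool" where
  "config n m x \<longleftrightarrow> (\<forall>i<n. x i < m) \<and> (\<forall>i\<ge>n. x i = 0)"

definition add_cfg :: "nat \<Rightarrow> nat \<Rightarrow> (nat \<Rightarrow> nat) \<Rightarrow> (nat \<Rightarrow> nat) \<Rightarrow> (nat \<Rightarrow> nat)" where
  "add_cfg n m x y = (\<lambda>i. if i < n then (x i + y i) mod m else 0)"

text \<open>Rotation by k: the new configuration x' satisfies x'_{(i+k) mod n} = x_i.\<close>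
definition rot_cfg :: "nat \<Rightarrow> nat \<Rightarrow> (nat \<Rightarrow> nat) \<Rightarrow> (nat \<Rightarrow> nat)" where
  "rot_cfg n k x = (\<lambda>j. if j < n then x ((j + n - k mod n) mod n) else 0)"

fun state :: "nat \<Rightarrow> nat \<Rightarrow> (nat \<Rightarrow> nat) \<Rightarrow> (nat \<Rightarrow> nat) list \<Rightarrow> nat list \<Rightarrow> nat \<Rightarrow> (nat \<Rightarrow> nat)" where
  "state n m x ys ks 0 = x"
| "state n m x ys ks (Suc t) = rot_cfg n (ks ! t) (add_cfg n m (state n m x ys ks t) (ys ! t))"

definition winning :: "nat \<Rightarrow> nat \<Rightarrow> (nat \<Rightarrow> nat) list \<Rightarrow> bool" where
  "winning n m ys \<longleftrightarrow> (\<forall>y\<in>set ys. config n m y) \<and>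
     (\<forall>x ks. config n m x \<longrightarrow> length ks = length ys \<longrightarrow> (\<forall>k\<in>set ks. k < n) \<longrightarrow>
        (\<exists>t\<le>length ys. state n m x ys ks t = (\<lambda>_. 0)))"

definition player_can_win :: "nat \<Rightarrow> nat \<Rightarrow> bool" where
  "player_can_win n m \<longleftrightarrow> (\<exists>ys. winning n m ys)"

end

theory Submission
  imports Defs "HOL-Computational_Algebra.Polynomial" "HOL-Number_Theory.Cong"
begin

text \<open>Identify Z_m^n with Z_m[X]/(X^n - 1), so that rotation by k is multiplication by X^k,
  and let Delta be multiplication by X - 1. The kernels W_j of Delta^j (\<open>level j\<close> below) are
  rotation-invariant subgroups, and rotating an element of W_(j+1) changes it only by an element
  of W_j. So if S wins from every start in W_j, then the blocks w, S, -w, S for all w in W_(j+1)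
  win from every start x in W_(j+1): modulo W_j the configuration is x between blocks, and in the
  block for w = -x it lies in W_j when S starts. If n = p^a and m = p^b, then (X - 1)^(p^a b)
  lies in the ideal generated by X^(p^a) - 1 and p^b, so Delta is nilpotent and some W_N contains
  every configuration.

  Conversely, let p \<noteq> q be primes with p dividing m and q dividing n, and consider the sums,
  modulo p, of the counters over the q residue classes of positions modulo q. Rotation by one
  permutes these class sums cyclically, and they all agree for the zero configuration. The
  adversary rotates by 0 or 1 so that they never all agree: if both choices made them agree, the
  consecutive differences of the class sums before the rotation would all be congruent to some d
  with q d \<equiv> 0, hence to 0, so those class sums already agreed.\<close>

lemma diff_dvd_power_diff:
  fixes x y :: "'a::comm_ring_1"
  shows "x - y dvd x ^ k - y ^ k"
  using power_diff_sumr2[of x k y] by (metis dvd_triv_left)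

lemma prime_dvd_diff_one_power_prime:
  fixes u :: "'a::comm_ring_1"
  assumes p: "prime p"
  shows "of_nat p dvd (u - 1) ^ p - (u ^ p - 1)"
proof -
  have p2: "p \<ge> 2" using p prime_ge_2_nat by blast
  define f where "f k = of_nat (p choose k) * u ^ k * (-1::'a) ^ (p - k)" for k
  have "(u - 1) ^ p = (\<Sum>k\<le>p. f k)" using binomial_ring[of u "-1" p] by (simp add: f_def)
  also have "{..p} = insert 0 (insert p {1..<p})" using p2 by auto
  also have "(\<Sum>k\<in>insert 0 (insert p {1..<p}). f k) = f 0 + (f p + (\<Sum>k\<in>{1..<p}. f k))"
    using p2 by (subst sum.insert; auto)+
  finally have expand: "(u - 1) ^ p - (u ^ p - 1) = (f 0 + 1) + (\<Sum>k\<in>{1..<p}. f k)"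
    by (simp add: f_def)
  have "of_nat p dvd f 0 + 1"
  proof (cases "p = 2")
    case False
    then have "odd p" using p prime_odd_nat p2 by (metis le_neq_implies_less)
    then show ?thesis by (simp add: f_def)
  qed (simp add: f_def)
  moreover have "of_nat p dvd f k" if "k \<in> {1..<p}" for k
  proof -
    have "p dvd p choose k" using dvd_choose_prime[of k p] p that by auto
    then obtain c where "p choose k = p * c" by blast
    then show ?thesis by (simp add: f_def mult.assoc)
  qed
  ultimately show ?thesis unfolding expand by (blast intro: dvd_add dvd_sum)
qed

lemma prime_dvd_diff_one_power_prime_power:
  fixes u :: "'a::comm_ring_1"
  assumes p: "prime p"
  shows "of_nat p dvd (u - 1) ^ (p ^ a) - (u ^ (p ^ a) - 1)"
proof (induction a)
  case (Suc a)
  define v where "v = u ^ (p ^ a) - 1"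
  have "of_nat p dvd ((u - 1) ^ (p ^ a)) ^ p - v ^ p"
    using dvd_trans[OF Suc[folded v_def] diff_dvd_power_diff] .
  moreover have "of_nat p dvd v ^ p - ((u ^ (p ^ a)) ^ p - 1)"
    using prime_dvd_diff_one_power_prime[OF p, of "u ^ (p ^ a)"] by (simp add: v_def)
  ultimately have "of_nat p dvd (((u - 1) ^ (p ^ a)) ^ p - v ^ p) + (v ^ p - ((u ^ (p ^ a)) ^ p - 1))"
    by (rule dvd_add)
  then show ?case by (simp add: power_mult[symmetric] algebra_simps)
qed simp

lemma diff_one_power_prime_power_decompose:
  fixes u :: "'a::comm_ring_1"
  assumes p: "prime p"
  obtains A C where "(u - 1) ^ (p ^ a * b) = (u ^ (p ^ a) - 1) * A + of_nat (p ^ b) * C"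
proof -
  define v where "v = u ^ (p ^ a) - 1"
  obtain c where c: "(u - 1) ^ (p ^ a) = v + of_nat p * c"
    using prime_dvd_diff_one_power_prime_power[OF p, of u a]
    by (metis (no_types, lifting) add_diff_cancel_left' dvdE v_def diff_add_cancel)
  obtain A where A: "(v + of_nat p * c) ^ b - (of_nat p * c) ^ b = v * A"
    using diff_dvd_power_diff[of "v + of_nat p * c" "of_nat p * c" b] by auto
  have "(u - 1) ^ (p ^ a * b) = (v + of_nat p * c) ^ b" by (simp add: power_mult c)
  also have "\<dots> = v * A + of_nat (p ^ b) * c ^ b"
    using A by (simp add: algebra_simps)
  finally have "(u - 1) ^ (p ^ a * b) = v * A + of_nat (p ^ b) * c ^ b" .
  then show ?thesis using that v_def by blast
qed

lemma cong_const_if_shifted_sums_const: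
  fixes a b :: "nat \<Rightarrow> int" and P :: int
  assumes coprime: "coprime (int q) P" and periodic: "a q = a 0"
    and sums: "\<And>i j. [a i + b i = a j + b j] (mod P)"
    and shifted_sums: "\<And>i j. [a i + b (Suc i) = a j + b (Suc j)] (mod P)"
  shows "[a i = a 0] (mod P)"
proof -
  define d where "d = a 1 - a 0"
  have step: "[a (Suc i) - a i = d] (mod P)" for i
    using cong_diff[OF sums[of "Suc i" 1] shifted_sums[of i 0]] by (simp add: d_def)
  have linear: "[a i = a 0 + int i * d] (mod P)" for i
  proof (induction i)
    case (Suc i)
    have "[a i + (a (Suc i) - a i) = a 0 + int i * d + d] (mod P)" using cong_add[OF Suc step] .
    then show ?case by (simp add: algebra_simps)
  qed simp
  have "[a 0 + int q * d = a 0 + int q * 0] (mod P)"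
    using linear[of q] periodic cong_sym by fastforce
  then have "[int q * d = int q * 0] (mod P)" by (simp only: cong_add_lcancel)
  then have "[d = 0] (mod P)" using coprime by (simp only: cong_mult_lcancel)
  then have "[a 0 + int i * d = a 0 + int i * 0] (mod P)" by (intro cong_add cong_scalar_left) simp_all
  then show ?thesis using cong_trans[OF linear[of i]] by simp
qed

lemma eq_prime_power_if_unique_prime_divisor:
  fixes x p :: nat
  assumes "x > 0" and p: "prime p" and unique: "\<And>r. prime r \<Longrightarrow> r dvd x \<Longrightarrow> r = p"
  shows "x = p ^ multiplicity p x"
proof -
  obtain y where y: "x = p ^ multiplicity p x * y" "\<not> p dvd y"
    using multiplicity_decompose'[of x p] assms(1) p by (metis not_prime_unit not_gr0)
  have "y = 1"
  proof (rule ccontr)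
    assume "y \<noteq> 1"
    then obtain r where r: "prime r" "r dvd y" using prime_factor_nat by blast
    then have "r dvd x" using y(1) by (metis dvd_mult)
    then show False using unique[OF r(1)] r(2) y(2) by simp
  qed
  then show ?thesis using y by simp
qed

lemma common_prime_power_or_distinct_prime_divisors:
  fixes n m :: nat
  assumes "n > 1" and "m > 1"
  shows "(\<exists>p a b. prime p \<and> a > 0 \<and> b > 0 \<and> n = p ^ a \<and> m = p ^ b) \<or>
    (\<exists>p q. prime p \<and> prime q \<and> p dvd m \<and> q dvd n \<and> p \<noteq> q)"
proof (rule disjCI)
  assume no_distinct: "\<not> (\<exists>p q. prime p \<and> prime q \<and> p dvd m \<and> q dvd n \<and> p \<noteq> q)"
  obtain p where p: "prime p" "p dvd m" using prime_factor_nat[of m] assms(2) by auto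
  obtain q where q: "prime q" "q dvd n" using prime_factor_nat[of n] assms(1) by auto
  have unique_m: "r = p" if "prime r" "r dvd m" for r
    using no_distinct that p q by blast
  have "n = p ^ multiplicity p n"
    using eq_prime_power_if_unique_prime_divisor[of n p] assms(1) p no_distinct by auto
  moreover have "m = p ^ multiplicity p m"
    using eq_prime_power_if_unique_prime_divisor[of m p] assms(2) p(1) unique_m by simp
  ultimately show "\<exists>p a b. prime p \<and> a > 0 \<and> b > 0 \<and> n = p ^ a \<and> m = p ^ b"
    using p(1) assms by (metis gr0I less_irrefl power_0)
qed

lemma ex_le_Suc_iff: "(\<exists>t\<le>Suc L. P t) \<longleftrightarrow> P 0 \<or> (\<exists>t\<le>L. P (Suc t))"
  by (metis le_eq_less_or_eq less_Suc_eq_0_disj)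

section \<open>The group of configurations\<close>

definition zero_cfg :: "nat \<Rightarrow> nat" where
  "zero_cfg = (\<lambda>_. 0)"

definition neg_cfg :: "nat \<Rightarrow> nat \<Rightarrow> (nat \<Rightarrow> nat) \<Rightarrow> (nat \<Rightarrow> nat)" where
  "neg_cfg n m x = (\<lambda>i. if i < n then (m - x i) mod m else 0)"

lemma int_rot_index:
  assumes "j < n"
  shows "int ((j + n - k mod n) mod n) = (int j - int k) mod int n"
proof -
  have "k mod n < n" using assms by simp
  then have "int ((j + n - k mod n) mod n) = ((int j - int k mod int n) + int n) mod int n"
    by (simp add: of_nat_mod algebra_simps)
  also have "\<dots> = (int j - int k) mod int n" by (simp add: mod_diff_right_eq)
  finally show ?thesis .
qed

locale game =
  fixes n m :: nat
  assumes n_pos: "0 < n" and m_pos: "0 < m"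
begin

abbreviation cfg :: "(nat \<Rightarrow> nat) \<Rightarrow> bool" where
  "cfg x \<equiv> config n m x"

abbreviation cfg_plus :: "(nat \<Rightarrow> nat) \<Rightarrow> (nat \<Rightarrow> nat) \<Rightarrow> nat \<Rightarrow> nat" (infixl "\<oplus>" 65) where
  "x \<oplus> y \<equiv> add_cfg n m x y"

abbreviation cfg_minus :: "(nat \<Rightarrow> nat) \<Rightarrow> nat \<Rightarrow> nat" ("\<ominus> _" [81] 80) where
  "\<ominus> x \<equiv> neg_cfg n m x"

abbreviation rot :: "nat \<Rightarrow> (nat \<Rightarrow> nat) \<Rightarrow> nat \<Rightarrow> nat" where
  "rot k x \<equiv> rot_cfg n k x"

lemma config_add_cfg [simp]: "cfg (x \<oplus> y)"
  using m_pos by (simp add: config_def add_cfg_def)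

lemma config_zero_cfg [simp]: "cfg zero_cfg"
  using m_pos by (simp add: config_def zero_cfg_def)

lemma config_neg_cfg [simp]: "cfg (\<ominus> x)"
  using m_pos by (simp add: config_def neg_cfg_def)

lemma config_rot_cfg [simp]: "cfg x \<Longrightarrow> cfg (rot k x)"
  using n_pos by (simp add: config_def rot_cfg_def)

lemma add_cfg_commute: "x \<oplus> y = y \<oplus> x"
  by (auto simp add: add_cfg_def add.commute)

lemma add_cfg_assoc: "x \<oplus> y \<oplus> z = x \<oplus> (y \<oplus> z)"
  by (auto simp add: add_cfg_def mod_add_left_eq mod_add_right_eq add.assoc)

lemma add_cfg_left_commute: "x \<oplus> (y \<oplus> z) = y \<oplus> (x \<oplus> z)"
  by (metis add_cfg_assoc add_cfg_commute)

lemmas add_cfg_ac = add_cfg_assoc add_cfg_commute add_cfg_left_commute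

lemma add_zero_cfg [simp]: "cfg x \<Longrightarrow> x \<oplus> zero_cfg = x"
  by (auto simp: add_cfg_def zero_cfg_def config_def)

lemma zero_add_cfg [simp]: "cfg x \<Longrightarrow> zero_cfg \<oplus> x = x"
  by (metis add_cfg_commute add_zero_cfg)

lemma add_neg_cfg [simp]: "cfg x \<Longrightarrow> x \<oplus> \<ominus> x = zero_cfg"
  by (auto simp: add_cfg_def neg_cfg_def zero_cfg_def config_def fun_eq_iff mod_add_right_eq
      less_imp_le)

lemma neg_add_cfg [simp]: "cfg x \<Longrightarrow> \<ominus> x \<oplus> x = zero_cfg"
  by (metis add_cfg_commute add_neg_cfg)

lemma add_neg_cancel_left_cfg: "cfg x \<Longrightarrow> cfg y \<Longrightarrow> x \<oplus> y \<oplus> \<ominus> x = y"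
  by (metis add_cfg_assoc add_cfg_commute add_neg_cfg add_zero_cfg)

lemma add_neg_cancel_right_cfg: "cfg x \<Longrightarrow> cfg y \<Longrightarrow> x \<oplus> \<ominus> y \<oplus> y = x"
  by (metis add_cfg_assoc neg_add_cfg add_zero_cfg)

lemma neg_cfg_unique:
  assumes "cfg x" and "cfg y" and "x \<oplus> y = zero_cfg"
  shows "\<ominus> x = y"
proof -
  have "\<ominus> x = \<ominus> x \<oplus> (x \<oplus> y)" using assms by simp
  also have "\<dots> = (x \<oplus> \<ominus> x) \<oplus> y" by (simp only: add_cfg_ac)
  also have "\<dots> = y" by (simp add: assms)
  finally show ?thesis .
qed

lemma neg_zero_cfg [simp]: "\<ominus> zero_cfg = zero_cfg"
  by (rule neg_cfg_unique) simp_all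

lemma neg_add_cfg_distrib:
  assumes "cfg x" and "cfg y"
  shows "\<ominus> (x \<oplus> y) = \<ominus> x \<oplus> \<ominus> y"
proof (rule neg_cfg_unique)
  have "x \<oplus> y \<oplus> (\<ominus> x \<oplus> \<ominus> y) = (x \<oplus> \<ominus> x) \<oplus> (y \<oplus> \<ominus> y)" by (simp only: add_cfg_ac)
  then show "x \<oplus> y \<oplus> (\<ominus> x \<oplus> \<ominus> y) = zero_cfg" using assms by simp
qed simp_all

lemma rot_add_cfg: "rot k (x \<oplus> y) = rot k x \<oplus> rot k y"
  using n_pos by (auto simp: rot_cfg_def add_cfg_def)

lemma rot_zero_cfg [simp]: "rot k zero_cfg = zero_cfg"
  by (auto simp: rot_cfg_def zero_cfg_def)

lemma rot_neg_cfg: "rot k (\<ominus> x) = \<ominus> (rot k x)"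
  using n_pos by (auto simp: rot_cfg_def neg_cfg_def)

lemma rot_rot_cfg: "rot a (rot b x) = rot (a + b) x"
proof
  fix j
  show "rot a (rot b x) j = rot (a + b) x j"
  proof (cases "j < n")
    case True
    define j' where "j' = (j + n - a mod n) mod n"
    have "j' < n" using n_pos by (simp add: j'_def)
    have "int ((j' + n - b mod n) mod n) = ((int j - int a) mod int n - int b) mod int n"
      using int_rot_index[OF \<open>j' < n\<close>] int_rot_index[OF True] by (simp add: j'_def)
    also have "\<dots> = int ((j + n - (a + b) mod n) mod n)"
      by (simp add: int_rot_index[OF True] mod_diff_left_eq diff_diff_eq)
    finally show ?thesis using True \<open>j' < n\<close> by (simp add: rot_cfg_def j'_def)
  qed (simp add: rot_cfg_def)
qed

lemma rot_0_cfg [simp]: "cfg x \<Longrightarrow> rot 0 x = x"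
  by (auto simp: rot_cfg_def config_def)

lemma rot_period_cfg: "cfg x \<Longrightarrow> rot n x = x"
  by (auto simp: rot_cfg_def config_def)

lemma rot_one_index:
  assumes "i < n"
  shows "(i + n - 1 mod n) mod n = (if i = 0 then n - 1 else i - 1)"
proof -
  have "int ((i + n - 1 mod n) mod n) = (int i - 1) mod int n"
    using int_rot_index[OF assms, of 1] by simp
  also have "\<dots> = int (if i = 0 then n - 1 else i - 1)"
    using assms by (auto simp: zmod_minus1)
  finally show ?thesis by (simp only: of_nat_eq_iff)
qed

lemma finite_configs: "finite {x. cfg x}"
proof (rule finite_subset)
  let ?lists = "{xs. set xs \<subseteq> {..<m} \<and> length xs = n}"
  show "{x. cfg x} \<subseteq> (\<lambda>xs i. if i < n then xs ! i else 0) ` ?lists"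
  proof
    fix x assume "x \<in> {x. cfg x}"
    then have "map x [0..<n] \<in> ?lists" and "x = (\<lambda>i. if i < n then map x [0..<n] ! i else 0)"
      by (auto simp: config_def)
    then show "x \<in> (\<lambda>xs i. if i < n then xs ! i else 0) ` ?lists" by (rule rev_image_eqI)
  qed
qed (simp add: finite_lists_length_eq)

section \<open>The difference operator\<close>

definition Delta :: "(nat \<Rightarrow> nat) \<Rightarrow> nat \<Rightarrow> nat" where
  "Delta x = rot 1 x \<oplus> \<ominus> x"

lemma config_Delta [simp]: "cfg (Delta x)"
  by (simp add: Delta_def)

lemma config_Delta_power [simp]: "cfg x \<Longrightarrow> cfg ((Delta ^^ j) x)"
  by (induction j) simp_all

lemma Delta_zero [simp]: "Delta zero_cfg = zero_cfg"
  by (simp add: Delta_def)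

lemma Delta_power_zero [simp]: "(Delta ^^ j) zero_cfg = zero_cfg"
  by (induction j) simp_all

lemma Delta_add:
  assumes "cfg x" and "cfg y"
  shows "Delta (x \<oplus> y) = Delta x \<oplus> Delta y"
proof -
  have "Delta (x \<oplus> y) = (rot 1 x \<oplus> rot 1 y) \<oplus> (\<ominus> x \<oplus> \<ominus> y)"
    using assms by (simp add: Delta_def rot_add_cfg neg_add_cfg_distrib)
  then show ?thesis by (simp only: Delta_def add_cfg_ac)
qed

lemma Delta_neg: "cfg x \<Longrightarrow> Delta (\<ominus> x) = \<ominus> (Delta x)"
  by (simp add: Delta_def rot_neg_cfg neg_add_cfg_distrib)

lemma Delta_rot: "cfg x \<Longrightarrow> Delta (rot k x) = rot k (Delta x)"
  by (simp add: Delta_def rot_add_cfg rot_neg_cfg rot_rot_cfg add.commute)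

lemma Delta_power_add: "cfg x \<Longrightarrow> cfg y \<Longrightarrow> (Delta ^^ j) (x \<oplus> y) = (Delta ^^ j) x \<oplus> (Delta ^^ j) y"
  by (induction j) (simp_all add: Delta_add)

lemma Delta_power_neg: "cfg x \<Longrightarrow> (Delta ^^ j) (\<ominus> x) = \<ominus> ((Delta ^^ j) x)"
  by (induction j) (simp_all add: Delta_neg)

lemma Delta_power_rot: "cfg x \<Longrightarrow> (Delta ^^ j) (rot k x) = rot k ((Delta ^^ j) x)"
  by (induction j) (simp_all add: Delta_rot)

definition const_cfg :: "int \<Rightarrow> nat \<Rightarrow> nat" where
  "const_cfg a = (\<lambda>i. if i = 0 then nat (a mod int m) else 0)"

text \<open>The coefficient of X^k is added at position k mod n, so that multiplication by X becomes
  rotation by one.\<close>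

definition poly_cfg :: "int poly \<Rightarrow> nat \<Rightarrow> nat" where
  "poly_cfg f = fold_coeffs (\<lambda>a c. const_cfg a \<oplus> rot 1 c) f zero_cfg"

lemma const_cfg_0 [simp]: "const_cfg 0 = zero_cfg"
  by (simp add: const_cfg_def zero_cfg_def fun_eq_iff)

lemma config_const_cfg [simp]: "cfg (const_cfg a)"
  using n_pos m_pos by (auto simp: config_def const_cfg_def nat_less_iff)

lemma const_cfg_add: "const_cfg (a + b) = const_cfg a \<oplus> const_cfg b"
proof
  fix i
  have "int ((nat (a mod int m) + nat (b mod int m)) mod m) = (a mod int m + b mod int m) mod int m"
    using m_pos by (simp add: of_nat_mod)
  also have "\<dots> = (a + b) mod int m" by (simp add: mod_add_eq)
  finally have "nat ((a + b) mod int m) = (nat (a mod int m) + nat (b mod int m)) mod m" by linarith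
  then show "const_cfg (a + b) i = (const_cfg a \<oplus> const_cfg b) i"
    using n_pos by (simp add: const_cfg_def add_cfg_def)
qed

lemma poly_cfg_0 [simp]: "poly_cfg 0 = zero_cfg"
  by (simp add: poly_cfg_def)

lemma poly_cfg_pCons: "poly_cfg (pCons a f) = const_cfg a \<oplus> rot 1 (poly_cfg f)"
proof (cases "a = 0 \<and> f = 0")
  case False
  then show ?thesis by (auto simp: poly_cfg_def)
qed simp

lemma config_poly_cfg [simp]: "cfg (poly_cfg f)"
  by (induction f) (simp_all add: poly_cfg_pCons)

lemma poly_cfg_add: "poly_cfg (f + g) = poly_cfg f \<oplus> poly_cfg g"
proof (induction f g rule: poly_induct2)
  case (pCons a f b g)
  then have "poly_cfg (pCons a f + pCons b g)
      = (const_cfg a \<oplus> const_cfg b) \<oplus> (rot 1 (poly_cfg f) \<oplus> rot 1 (poly_cfg g))"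
    by (simp add: poly_cfg_pCons const_cfg_add rot_add_cfg)
  also have "\<dots> = poly_cfg (pCons a f) \<oplus> poly_cfg (pCons b g)"
    by (simp only: poly_cfg_pCons add_cfg_ac)
  finally show ?case .
qed simp

lemma poly_cfg_uminus: "poly_cfg (- f) = \<ominus> (poly_cfg f)"
  by (rule neg_cfg_unique[symmetric]) (simp_all flip: poly_cfg_add)

lemma poly_cfg_diff: "poly_cfg (f - g) = poly_cfg f \<oplus> \<ominus> (poly_cfg g)"
  using poly_cfg_add[of f "- g"] by (simp add: poly_cfg_uminus)

lemma poly_cfg_monom_mult: "poly_cfg ([:0, 1:] ^ k * f) = rot k (poly_cfg f)"
proof (induction k)
  case (Suc k)
  have "[:0, 1:] ^ Suc k * f = pCons 0 ([:0, 1:] ^ k * f)" by (simp add: mult.assoc)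
  then show ?case by (simp add: Suc poly_cfg_pCons rot_rot_cfg)
qed simp

lemma poly_cfg_smult: "int m dvd c \<Longrightarrow> poly_cfg (smult c f) = zero_cfg"
proof (induction f)
  case (pCons a f)
  have "const_cfg (c * a) = zero_cfg" using pCons.prems by (auto simp: const_cfg_def zero_cfg_def)
  then show ?case using pCons by (simp add: poly_cfg_pCons)
qed simp

lemma poly_cfg_cyclic: "poly_cfg (([:0, 1:] ^ n - 1) * f) = zero_cfg"
proof -
  have "([:0, 1:] ^ n - 1) * f = [:0, 1:] ^ n * f - f" by (simp add: algebra_simps)
  then show ?thesis by (simp add: poly_cfg_diff poly_cfg_monom_mult rot_period_cfg)
qed

lemma Delta_poly_cfg: "Delta (poly_cfg f) = poly_cfg (([:0, 1:] - 1) * f)"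
proof -
  have "([:0, 1:] - 1) * f = [:0, 1:] ^ 1 * f - f" by (simp add: algebra_simps)
  then show ?thesis by (simp only: Delta_def poly_cfg_diff poly_cfg_monom_mult)
qed

lemma Delta_power_poly_cfg: "(Delta ^^ j) (poly_cfg f) = poly_cfg (([:0, 1:] - 1) ^ j * f)"
  by (induction j) (simp_all add: Delta_poly_cfg mult.assoc)

lemma poly_cfg_Poly:
  assumes "length as \<le> n" and "\<forall>a\<in>set as. 0 \<le> a \<and> a < int m"
  shows "poly_cfg (Poly as) = (\<lambda>i. if i < length as then nat (as ! i) else 0)"
  using assms
proof (induction as)
  case (Cons a as)
  show ?case
  proof
    fix i
    show "poly_cfg (Poly (a # as)) i = (if i < length (a # as) then nat ((a # as) ! i) else 0)"
      using Cons rot_one_index[of i]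
      by (auto simp: poly_cfg_pCons add_cfg_def rot_cfg_def const_cfg_def nth_Cons' nat_less_iff)
  qed
qed (simp add: zero_cfg_def)

lemma config_eq_poly_cfg:
  assumes "cfg x"
  shows "x = poly_cfg (Poly (map (\<lambda>i. int (x i)) [0..<n]))"
  using assms by (subst poly_cfg_Poly) (auto simp: config_def)

lemma Delta_nilpotent:
  assumes "n = 1 \<or> m = 1 \<or> (\<exists>p a b. prime p \<and> n = p ^ a \<and> m = p ^ b)"
  obtains N where "\<And>x. cfg x \<Longrightarrow> (Delta ^^ N) x = zero_cfg"
proof -
  consider "m = 1" | "n = 1" | p a b where "prime p" "n = p ^ a" "m = p ^ b"
    using assms by blast
  then show ?thesis
  proof cases
    case 1
    then have "x = zero_cfg" if "cfg x" for x
      using that by (auto simp: config_def zero_cfg_def fun_eq_iff) (metis not_less)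
    then show ?thesis using that[of 0] by simp
  next
    case 2
    have "Delta x = zero_cfg" if "cfg x" for x
    proof -
      have "rot 1 x = x" using 2 rot_period_cfg[OF that] by simp
      then show ?thesis using that by (simp add: Delta_def)
    qed
    then show ?thesis using that[of 1] by simp
  next
    case 3
    obtain A C where AC: "([:0, 1:] - 1) ^ (p ^ a * b)
        = ([:0, 1:] ^ (p ^ a) - 1) * A + of_nat (p ^ b) * (C :: int poly)"
      using diff_one_power_prime_power_decompose[OF \<open>prime p\<close>] by blast
    have "(Delta ^^ (p ^ a * b)) x = zero_cfg" if "cfg x" for x
    proof -
      obtain f where x: "x = poly_cfg f" using config_eq_poly_cfg[OF \<open>cfg x\<close>] by blast
      have "(Delta ^^ (p ^ a * b)) x = poly_cfg (([:0, 1:] ^ n - 1) * (A * f) + smult (int m) (C * f))"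
        unfolding x Delta_power_poly_cfg AC using 3 by (simp add: algebra_simps of_nat_poly)
      also have "\<dots> = zero_cfg" by (simp add: poly_cfg_add poly_cfg_cyclic poly_cfg_smult)
      finally show ?thesis .
    qed
    then show ?thesis using that by blast
  qed
qed

fun reaches_zero :: "(nat \<Rightarrow> nat) \<Rightarrow> (nat \<Rightarrow> nat) list \<Rightarrow> nat list \<Rightarrow> bool" where
  "reaches_zero x [] ks \<longleftrightarrow> x = zero_cfg"
| "reaches_zero x (y # ys) [] \<longleftrightarrow> x = zero_cfg"
| "reaches_zero x (y # ys) (k # ks) \<longleftrightarrow> x = zero_cfg \<or> reaches_zero (rot k (x \<oplus> y)) ys ks"

fun play :: "(nat \<Rightarrow> nat) \<Rightarrow> (nat \<Rightarrow> nat) list \<Rightarrow> nat list \<Rightarrow> nat \<Rightarrow> nat" where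
  "play x [] ks = x"
| "play x (y # ys) [] = x"
| "play x (y # ys) (k # ks) = play (rot k (x \<oplus> y)) ys ks"

lemma reaches_zero_append:
  assumes "length ks = length ys + length zs"
  shows "reaches_zero x (ys @ zs) ks \<longleftrightarrow>
    reaches_zero x ys (take (length ys) ks) \<or>
    reaches_zero (play x ys (take (length ys) ks)) zs (drop (length ys) ks)"
  using assms
proof (induction ys arbitrary: x ks)
  case Nil
  then show ?case by (cases zs; cases ks) auto
next
  case (Cons y ys)
  then show ?case by (cases ks) auto
qed

lemma play_append:
  assumes "length ks = length ys + length zs"
  shows "play x (ys @ zs) ks = play (play x ys (take (length ys) ks)) zs (drop (length ys) ks)"
  using assms
proof (induction ys arbitrary: x ks)
  case (Cons y ys)
  then show ?case by (cases ks) auto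
qed simp

lemma state_Cons_Suc:
  "state n m x (y # ys) (k # ks) (Suc t) = state n m (rot k (x \<oplus> y)) ys ks t"
  by (induction t) auto

lemma reaches_zero_iff_state:
  assumes "length ks = length ys"
  shows "reaches_zero x ys ks \<longleftrightarrow> (\<exists>t\<le>length ys. state n m x ys ks t = zero_cfg)"
  using assms
proof (induction ys arbitrary: x ks)
  case (Cons y ys)
  then show ?case by (cases ks) (auto simp: ex_le_Suc_iff state_Cons_Suc simp del: state.simps(2))
qed simp

section \<open>The winning strategy\<close>

definition level :: "nat \<Rightarrow> (nat \<Rightarrow> nat) set" where
  "level j = {x. cfg x \<and> (Delta ^^ j) x = zero_cfg}"

lemma level_0: "level 0 = {zero_cfg}"
  by (auto simp: level_def)

lemma zero_in_level [simp]: "zero_cfg \<in> level j"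
  by (simp add: level_def)

lemma config_if_in_level: "x \<in> level j \<Longrightarrow> cfg x"
  by (simp add: level_def)

lemma level_add: "x \<in> level j \<Longrightarrow> y \<in> level j \<Longrightarrow> x \<oplus> y \<in> level j"
  by (simp add: level_def Delta_power_add)

lemma level_neg: "x \<in> level j \<Longrightarrow> \<ominus> x \<in> level j"
  by (simp add: level_def Delta_power_neg)

lemma level_rot: "x \<in> level j \<Longrightarrow> rot k x \<in> level j"
  by (simp add: level_def Delta_power_rot)

lemma level_Suc_mono: "x \<in> level j \<Longrightarrow> x \<in> level (Suc j)"
  by (simp add: level_def)

lemma Delta_in_level: "x \<in> level (Suc j) \<Longrightarrow> Delta x \<in> level j"
  by (simp add: level_def funpow_Suc_right del: funpow.simps)

lemma rot_diff_in_level: "x \<in> level (Suc j) \<Longrightarrow> rot k x \<oplus> \<ominus> x \<in> level j"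
proof (induction k)
  case 0
  then show ?case using config_if_in_level by simp
next
  case (Suc k)
  have x: "cfg x" using Suc.prems by (rule config_if_in_level)
  define w where "w = rot k x \<oplus> \<ominus> x"
  have "rot (Suc k) x = rot 1 (w \<oplus> x)"
    using x by (simp add: w_def add_neg_cancel_right_cfg rot_rot_cfg)
  then have "rot (Suc k) x \<oplus> \<ominus> x = rot 1 w \<oplus> Delta x"
    by (simp only: rot_add_cfg Delta_def add_cfg_ac)
  then show ?case
    using level_add[OF level_rot Delta_in_level[OF Suc.prems]] Suc by (simp add: w_def)
qed

definition level_equiv :: "nat \<Rightarrow> (nat \<Rightarrow> nat) \<Rightarrow> (nat \<Rightarrow> nat) \<Rightarrow> bool" where
  "level_equiv j x y \<longleftrightarrow> x \<oplus> \<ominus> y \<in> level j"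

lemma level_equiv_refl: "cfg x \<Longrightarrow> level_equiv j x x"
  by (simp add: level_equiv_def)

lemma level_equiv_trans:
  assumes "cfg y" and "level_equiv j x y" and "level_equiv j y z"
  shows "level_equiv j x z"
proof -
  have "x \<oplus> \<ominus> y \<oplus> (y \<oplus> \<ominus> z) = x \<oplus> (y \<oplus> \<ominus> y \<oplus> \<ominus> z)" by (simp only: add_cfg_ac)
  also have "\<dots> = x \<oplus> \<ominus> z" using assms(1) by simp
  finally show ?thesis using assms level_add unfolding level_equiv_def by metis
qed

lemma level_equiv_add:
  assumes "cfg y" and "cfg z" and "level_equiv j x y"
  shows "level_equiv j (x \<oplus> z) (y \<oplus> z)"
proof -
  have "x \<oplus> z \<oplus> \<ominus> (y \<oplus> z) = x \<oplus> \<ominus> y \<oplus> (z \<oplus> \<ominus> z)"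
    using assms by (simp only: neg_add_cfg_distrib add_cfg_ac)
  then show ?thesis using assms by (simp add: level_equiv_def)
qed

lemma level_equiv_rot: "x \<in> level (Suc j) \<Longrightarrow> level_equiv j (rot k x) x"
  by (simp add: level_equiv_def rot_diff_in_level)

lemma level_equiv_in_level:
  assumes "cfg x" and "level_equiv j x y" and "y \<in> level j"
  shows "x \<in> level j"
  using level_add[of "x \<oplus> \<ominus> y" j y] assms config_if_in_level
  by (simp add: level_equiv_def add_neg_cancel_right_cfg)

lemma move_level_equiv:
  assumes "x \<in> level (Suc j)" and "y \<in> level (Suc j)" and "cfg x0" and "level_equiv j x x0"
  shows "rot k (x \<oplus> y) \<in> level (Suc j) \<and> level_equiv j (rot k (x \<oplus> y)) (x0 \<oplus> y)"
proof -
  have "level_equiv j (rot k (x \<oplus> y)) (x \<oplus> y)" using assms by (simp add: level_equiv_rot level_add)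
  moreover have "level_equiv j (x \<oplus> y) (x0 \<oplus> y)"
    using level_equiv_add[OF assms(3) config_if_in_level[OF assms(2)] assms(4)] .
  ultimately have "level_equiv j (rot k (x \<oplus> y)) (x0 \<oplus> y)"
    using level_equiv_trans[OF config_add_cfg] by blast
  then show ?thesis using assms by (simp add: level_add level_rot)
qed

lemma play_level_equiv:
  assumes "set ys \<subseteq> level j" and "x \<in> level (Suc j)" and "length ks = length ys"
  shows "play x ys ks \<in> level (Suc j) \<and> level_equiv j (play x ys ks) x"
  using assms
proof (induction ys arbitrary: x ks)
  case Nil
  then show ?case using config_if_in_level by (simp add: level_equiv_refl)
next
  case (Cons y ys)
  then obtain k ks' where ks: "ks = k # ks'" by (cases ks) auto
  have y: "y \<in> level j" "y \<in> level (Suc j)" using Cons.prems level_Suc_mono by auto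
  define x' where "x' = rot k (x \<oplus> y)"
  have x': "x' \<in> level (Suc j)" using Cons.prems y by (simp add: x'_def level_add level_rot)
  have "level_equiv j x' (x \<oplus> y)"
    using Cons.prems y by (simp add: x'_def level_equiv_rot level_add)
  moreover have "level_equiv j (x \<oplus> y) x"
    using y config_if_in_level[OF Cons.prems(2)] config_if_in_level[OF y(1)]
    by (simp add: level_equiv_def add_neg_cancel_left_cfg)
  ultimately have "level_equiv j x' x" by (rule level_equiv_trans[rotated]) simp
  then show ?case
    using Cons.IH[OF _ x', of ks'] Cons.prems ks level_equiv_trans[OF config_if_in_level[OF x']]
    by (auto simp: x'_def)
qed

definition winning_on :: "(nat \<Rightarrow> nat) set \<Rightarrow> (nat \<Rightarrow> nat) list \<Rightarrow> bool" where
  "winning_on A ys \<longleftrightarrow> set ys \<subseteq> A \<and> (\<forall>x\<in>A. \<forall>ks. length ks = length ys \<longrightarrow> reaches_zero x ys ks)"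

definition block :: "(nat \<Rightarrow> nat) list \<Rightarrow> (nat \<Rightarrow> nat) \<Rightarrow> (nat \<Rightarrow> nat) list" where
  "block S w = w # S @ \<ominus> w # S"

lemma block_step:
  assumes S: "winning_on (level j) S"
    and w: "w \<in> level (Suc j)" and x: "x \<in> level (Suc j)" and x0: "cfg x0" "level_equiv j x x0"
    and ks: "length ks = length (block S w)"
  shows "reaches_zero x (block S w) ks \<or>
    (x0 \<oplus> w \<notin> level j \<and> play x (block S w) ks \<in> level (Suc j) \<and>
     level_equiv j (play x (block S w) ks) x0)"
proof -
  have S_level: "set S \<subseteq> level j" using S by (simp add: winning_on_def)
  obtain k ks' where ks': "ks = k # ks'" "length ks' = length S + length (\<ominus> w # S)"
    using ks by (cases ks) (auto simp: block_def)
  define x1 where "x1 = rot k (x \<oplus> w)"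
  have x1: "x1 \<in> level (Suc j)" "level_equiv j x1 (x0 \<oplus> w)"
    using move_level_equiv[OF x w x0] by (simp_all add: x1_def)
  show ?thesis
  proof (cases "x0 \<oplus> w \<in> level j")
    case True
    then have "x1 \<in> level j"
      using level_equiv_in_level[OF config_if_in_level[OF x1(1)] x1(2)] by simp
    then have "reaches_zero x1 (S @ \<ominus> w # S) ks'"
      using S ks' reaches_zero_append[OF ks'(2)] by (simp add: winning_on_def)
    then show ?thesis by (simp add: ks' block_def x1_def)
  next
    case False
    define x2 where "x2 = play x1 S (take (length S) ks')"
    have x2: "x2 \<in> level (Suc j)" "level_equiv j x2 (x0 \<oplus> w)"
      using play_level_equiv[OF S_level x1(1)] ks' level_equiv_trans[OF config_if_in_level[OF x1(1)] _ x1(2)]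
      by (simp_all add: x2_def)
    obtain k' ks'' where ks'': "drop (length S) ks' = k' # ks''" "length ks'' = length S"
      using ks' by (cases "drop (length S) ks'") (auto dest: arg_cong[of _ _ length])
    define x3 where "x3 = rot k' (x2 \<oplus> \<ominus> w)"
    have "x0 \<oplus> w \<oplus> \<ominus> w = x0"
      using x0 config_if_in_level[OF w] by (metis add_cfg_commute add_neg_cancel_left_cfg)
    then have x3: "x3 \<in> level (Suc j)" "level_equiv j x3 x0"
      using move_level_equiv[OF x2(1) level_neg[OF w] _ x2(2)] by (simp_all add: x3_def)
    have "play x (block S w) ks = play x3 S ks''"
      using ks' ks'' by (simp add: block_def x1_def x2_def x3_def play_append)
    then show ?thesis
      using False play_level_equiv[OF S_level x3(1) ks''(2)] x3(2)
        level_equiv_trans[OF config_if_in_level[OF x3(1)]] by auto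
  qed
qed

lemma concat_blocks_step:
  assumes S: "winning_on (level j) S" and L: "set L \<subseteq> level (Suc j)"
    and x: "x \<in> level (Suc j)" and x0: "cfg x0" "level_equiv j x x0"
    and ks: "length ks = length (concat (map (block S) L))"
  shows "reaches_zero x (concat (map (block S) L)) ks \<or> (\<forall>w\<in>set L. x0 \<oplus> w \<notin> level j)"
  using L x x0(2) ks
proof (induction L arbitrary: x ks)
  case (Cons w L)
  let ?ks1 = "take (length (block S w)) ks" and ?ks2 = "drop (length (block S w)) ks"
  have "w \<in> level (Suc j)" and "length ?ks1 = length (block S w)" using Cons.prems by simp_all
  from block_step[OF S this(1) Cons.prems(2) x0(1) Cons.prems(3) this(2)]
  consider "reaches_zero x (block S w) ?ks1"
    | "x0 \<oplus> w \<notin> level j" "play x (block S w) ?ks1 \<in> level (Suc j)"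
      "level_equiv j (play x (block S w) ?ks1) x0"
    by blast
  then show ?case
  proof cases
    case 1
    then show ?thesis using Cons.prems(4) by (simp add: reaches_zero_append)
  next
    case 2
    then show ?thesis
      using Cons.IH[of "play x (block S w) ?ks1" ?ks2] Cons.prems by (auto simp: reaches_zero_append)
  qed
qed simp

lemma winning_on_level: "\<exists>S. winning_on (level j) S"
proof (induction j)
  case 0
  have "winning_on (level 0) []" by (simp add: winning_on_def level_0)
  then show ?case ..
next
  case (Suc j)
  then obtain S where S: "winning_on (level j) S" ..
  have "finite (level (Suc j))"
    using finite_configs by (rule finite_subset[rotated]) (auto simp: level_def)
  then obtain L where L: "set L = level (Suc j)" using finite_list by blast
  have "winning_on (level (Suc j)) (concat (map (block S) L))"
    unfolding winning_on_def
  proof (intro conjI ballI allI impI)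
    show "set (concat (map (block S) L)) \<subseteq> level (Suc j)"
      using S L level_Suc_mono level_neg by (auto simp: winning_on_def block_def)
  next
    fix x and ks :: "nat list"
    assume x: "x \<in> level (Suc j)" and ks: "length ks = length (concat (map (block S) L))"
    have "\<ominus> x \<in> set L" and "x \<oplus> \<ominus> x \<in> level j"
      using L x config_if_in_level[OF x] level_neg by simp_all
    then show "reaches_zero x (concat (map (block S) L)) ks"
      using concat_blocks_step[OF S _ x config_if_in_level[OF x] level_equiv_refl[OF config_if_in_level[OF x]] ks] L
      by blast
  qed
  then show ?case ..
qed

lemma player_can_win_if_Delta_nilpotent:
  assumes "\<And>x. cfg x \<Longrightarrow> (Delta ^^ N) x = zero_cfg"
  shows "player_can_win n m"
proof -
  have "level N = {x. cfg x}" using assms by (auto simp: level_def)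
  moreover obtain S where "winning_on (level N) S" using winning_on_level ..
  ultimately have "winning n m S"
    by (auto simp: winning_def winning_on_def reaches_zero_iff_state zero_cfg_def)
  then show ?thesis by (auto simp: player_can_win_def)
qed

end

section \<open>The adversary\<close>

locale two_prime_game = game +
  fixes p q :: nat
  assumes prime_p: "prime p" and prime_q: "prime q"
    and p_dvd_m: "p dvd m" and q_dvd_n: "q dvd n" and p_neq_q: "p \<noteq> q"
begin

definition class_sum :: "(nat \<Rightarrow> nat) \<Rightarrow> nat \<Rightarrow> int" where
  "class_sum x j = (\<Sum>i | i < n \<and> [i = j] (mod q). int (x i))"

lemma class_sum_rot_Suc: "class_sum (rot 1 x) (Suc j) = class_sum x j"
proof -
  define g where "g i = (if i = 0 then n - 1 else i - 1)" for i
  define h where "h i = (if Suc i = n then 0 else Suc i)" for i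
  have n_cong: "[n = 0] (mod q)" using q_dvd_n by (simp add: cong_0_iff)
  have Suc_cong: "[Suc a = Suc b] (mod q) \<longleftrightarrow> [a = b] (mod q)" for a b
    using cong_add_rcancel_nat[of a 1 b q] by simp
  have "class_sum (rot 1 x) (Suc j) = (\<Sum>i | i < n \<and> [i = Suc j] (mod q). int (x (g i)))"
    unfolding class_sum_def using rot_one_index by (intro sum.cong) (auto simp: rot_cfg_def g_def)
  also have "\<dots> = class_sum x j"
    unfolding class_sum_def
  proof (rule sum.reindex_bij_witness[where i = h and j = g])
    fix i assume i: "i \<in> {i. i < n \<and> [i = Suc j] (mod q)}"
    then show "h (g i) = i" using n_pos by (auto simp: g_def h_def)
    have "[Suc (g i) = Suc j] (mod q)"
    proof (cases "i = 0")
      case True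
      then show ?thesis using i n_pos cong_trans[OF n_cong] by (simp add: g_def)
    qed (use i in \<open>simp add: g_def\<close>)
    then show "g i \<in> {i. i < n \<and> [i = j] (mod q)}" using i by (auto simp: g_def Suc_cong)
  next
    fix i assume i: "i \<in> {i. i < n \<and> [i = j] (mod q)}"
    then show "g (h i) = i" by (auto simp: g_def h_def)
    have "[h i = Suc j] (mod q)"
    proof (cases "Suc i = n")
      case True
      have "[n = Suc j] (mod q)" using i True[symmetric] by (simp add: Suc_cong)
      then show ?thesis using True cong_trans[OF cong_sym[OF n_cong]] by (simp add: h_def)
    qed (use i in \<open>simp add: h_def Suc_cong\<close>)
    then show "h i \<in> {i. i < n \<and> [i = Suc j] (mod q)}" using i by (auto simp: h_def)
  qed simp
  finally show ?thesis .
qed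

lemma class_sum_add: "[class_sum (x \<oplus> y) j = class_sum x j + class_sum y j] (mod int p)"
proof -
  have "[int ((x i + y i) mod m) = int (x i) + int (y i)] (mod int p)" for i
    using p_dvd_m by (auto simp: of_nat_mod intro: cong_dvd_modulus[of _ _ "int m"])
  then show ?thesis
    unfolding class_sum_def sum.distrib[symmetric] by (intro cong_sum) (simp add: add_cfg_def)
qed

lemma class_sum_period: "class_sum x q = class_sum x 0"
  by (simp add: class_sum_def cong_def)

definition balanced :: "(nat \<Rightarrow> nat) \<Rightarrow> bool" where
  "balanced x \<longleftrightarrow> (\<forall>i j. [class_sum x i = class_sum x j] (mod int p))"

lemma balanced_zero: "balanced zero_cfg"
  by (simp add: balanced_def class_sum_def zero_cfg_def)

lemma balanced_if_rot_one_balanced: "balanced (rot 1 x) \<Longrightarrow> balanced x"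
  by (metis balanced_def class_sum_rot_Suc)

lemma not_balanced_rot:
  assumes "cfg x" and "\<not> balanced x" and "k \<in> {0, 1}"
  shows "\<not> balanced (rot k x)"
proof (cases "k = 0")
  case False
  then have "k = 1" using assms(3) by simp
  then show ?thesis using assms(2) balanced_if_rot_one_balanced by blast
qed (use assms in simp)

lemma balanced_add_cong:
  assumes "balanced (x \<oplus> y)"
  shows "[class_sum x i + class_sum y i = class_sum x j + class_sum y j] (mod int p)"
proof -
  have "[class_sum x i + class_sum y i = class_sum (x \<oplus> y) i] (mod int p)"
    by (rule cong_sym[OF class_sum_add])
  also have "[class_sum (x \<oplus> y) i = class_sum (x \<oplus> y) j] (mod int p)"
    using assms by (simp add: balanced_def)
  also have "[class_sum (x \<oplus> y) j = class_sum x j + class_sum y j] (mod int p)"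
    by (rule class_sum_add)
  finally show ?thesis .
qed

lemma rotation_choice:
  assumes "cfg w" and "\<not> balanced w"
  shows "\<exists>k\<in>{0, 1}. \<not> balanced (rot k w \<oplus> y)"
proof (rule ccontr)
  assume "\<not> ?thesis"
  then have balanced: "balanced (w \<oplus> y)" "balanced (rot 1 w \<oplus> y)" using assms(1) by auto
  have coprime: "coprime (int q) (int p)"
    using primes_coprime[OF prime_q prime_p] p_neq_q by simp
  have sums: "[class_sum w i + class_sum y i = class_sum w j + class_sum y j] (mod int p)" for i j
    using balanced_add_cong[OF balanced(1)] .
  have shifted_sums:
    "[class_sum w i + class_sum y (Suc i) = class_sum w j + class_sum y (Suc j)] (mod int p)" for i j
    using balanced_add_cong[OF balanced(2), of "Suc i" "Suc j"] by (simp only: class_sum_rot_Suc)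
  have const: "[class_sum w i = class_sum w 0] (mod int p)" for i
    using cong_const_if_shifted_sums_const[where a = "class_sum w" and b = "class_sum y",
        OF coprime class_sum_period sums shifted_sums] .
  have "balanced w" unfolding balanced_def
  proof (intro allI)
    fix i j show "[class_sum w i = class_sum w j] (mod int p)"
      using cong_trans[OF const[of i] cong_sym[OF const[of j]]] .
  qed
  with assms(2) show False by simp
qed

definition unit_cfg :: "nat \<Rightarrow> nat" where
  "unit_cfg = (\<lambda>i. if i = 0 then 1 else 0)"

lemma config_unit_cfg: "cfg unit_cfg"
  using n_pos prime_gt_1_nat[OF prime_p] dvd_imp_le[OF p_dvd_m m_pos]
  by (auto simp: config_def unit_cfg_def)

lemma unit_cfg_not_balanced: "\<not> balanced unit_cfg"
proof
  have "class_sum unit_cfg j = (if [0 = j] (mod q) then 1 else 0)" for j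
  proof -
    have "class_sum unit_cfg j = (\<Sum>i | i < n \<and> [i = j] (mod q). if i = 0 then 1 else 0)"
      unfolding class_sum_def by (rule sum.cong) (auto simp: unit_cfg_def)
    also have "\<dots> = (if [0 = j] (mod q) then 1 else 0)" using n_pos by (subst sum.delta) auto
    finally show ?thesis .
  qed
  moreover have "\<not> [0 = 1] (mod q)" using prime_gt_1_nat[OF prime_q] by (simp add: cong_def)
  moreover assume "balanced unit_cfg"
  ultimately have "[1 = 0] (mod int p)" unfolding balanced_def by (metis cong_refl)
  then show False using prime_p by (auto simp: cong_0_iff)
qed

text \<open>\<open>hd (ys @ [zero_cfg])\<close> is the next move, or the zero configuration once the moves are
  exhausted.\<close>

lemma adversary:
  assumes "cfg x" and "\<not> balanced x" and "\<not> balanced (x \<oplus> hd (ys @ [zero_cfg]))"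
  shows "\<exists>ks. length ks = length ys \<and> set ks \<subseteq> {0, 1} \<and> \<not> reaches_zero x ys ks"
  using assms
proof (induction ys arbitrary: x)
  case Nil
  have "\<not> reaches_zero x [] []" using Nil.prems(2) balanced_zero by auto
  then show ?case by simp
next
  case (Cons y ys)
  have "\<not> balanced (x \<oplus> y)" using Cons.prems(3) by simp
  then obtain k where k: "k \<in> {0, 1}" "\<not> balanced (rot k (x \<oplus> y) \<oplus> hd (ys @ [zero_cfg]))"
    using rotation_choice[OF config_add_cfg] by blast
  moreover have "\<not> balanced (rot k (x \<oplus> y))"
    using not_balanced_rot[OF config_add_cfg \<open>\<not> balanced (x \<oplus> y)\<close> k(1)] .
  ultimately obtain ks where ks: "length ks = length ys" "set ks \<subseteq> {0, 1}"
    "\<not> reaches_zero (rot k (x \<oplus> y)) ys ks"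
    using Cons.IH[of "rot k (x \<oplus> y)"] by auto
  have "x \<noteq> zero_cfg" using Cons.prems(2) balanced_zero by auto
  then have "\<not> reaches_zero x (y # ys) (k # ks)" using ks(3) by simp
  then show ?case using k(1) ks(1,2) by (intro exI[of _ "k # ks"]) simp
qed

lemma not_winning: "\<not> winning n m ys"
proof
  assume winning: "winning n m ys"
  obtain k where k: "k \<in> {0, 1}" "\<not> balanced (rot k unit_cfg \<oplus> hd (ys @ [zero_cfg]))"
    using rotation_choice[OF config_unit_cfg unit_cfg_not_balanced] by blast
  moreover have "\<not> balanced (rot k unit_cfg)"
    using not_balanced_rot[OF config_unit_cfg unit_cfg_not_balanced k(1)] .
  ultimately obtain ks where ks: "length ks = length ys" "set ks \<subseteq> {0, 1}"
    "\<not> reaches_zero (rot k unit_cfg) ys ks"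
    using adversary[of "rot k unit_cfg" ys] config_unit_cfg by auto
  have "1 < n"
    using prime_gt_1_nat[OF prime_q] dvd_imp_le[OF q_dvd_n n_pos] by linarith
  then have "\<forall>k\<in>set ks. k < n" using ks(2) by auto
  moreover have "config n m (rot k unit_cfg)" using config_unit_cfg by simp
  ultimately have "\<exists>t\<le>length ys. state n m (rot k unit_cfg) ys ks t = (\<lambda>_. 0)"
    using winning ks(1) unfolding winning_def by blast
  then show False using ks(1,3) by (simp add: reaches_zero_iff_state zero_cfg_def)
qed

end

theorem theorem1p1:
  fixes n m :: nat
  assumes "n > 0" and "m > 0"
  shows "player_can_win n m \<longleftrightarrow>
    (n = 1 \<or> m = 1 \<or> (\<exists>p a b. prime p \<and> a > 0 \<and> b > 0 \<and> n = p ^ a \<and> m = p ^ b))"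
proof
  assume win: "player_can_win n m"
  show "n = 1 \<or> m = 1 \<or> (\<exists>p a b. prime p \<and> a > 0 \<and> b > 0 \<and> n = p ^ a \<and> m = p ^ b)"
  proof (rule ccontr)
    assume "\<not> ?thesis"
    then obtain p q where "prime p" "prime q" "p dvd m" "q dvd n" "p \<noteq> q"
      using common_prime_power_or_distinct_prime_divisors[of n m] assms by fastforce
    then interpret two_prime_game n m p q
      using assms by unfold_locales
    show False using win not_winning by (auto simp: player_can_win_def)
  qed
next
  assume "n = 1 \<or> m = 1 \<or> (\<exists>p a b. prime p \<and> a > 0 \<and> b > 0 \<and> n = p ^ a \<and> m = p ^ b)"
  then have cases: "n = 1 \<or> m = 1 \<or> (\<exists>p a b. prime p \<and> n = p ^ a \<and> m = p ^ b)" by blast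
  interpret game n m using assms by unfold_locales
  obtain N where "\<And>x. config n m x \<Longrightarrow> (Delta ^^ N) x = zero_cfg"
    using Delta_nilpotent[OF cases] by blast
  then show "player_can_win n m" by (rule player_can_win_if_Delta_nilpotent)
qed

end
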